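(* For every online learning algorithm for the Dd-MDP problem, there exists a $T$-round Dd-MDP instance (with a finite policy collection) on which the algorithm's regret is $\Omega(T)$.
   Context: Dynamic deterministic MDP (Dd-MDP): finite state set $\mathcal S$, finite action set $\mathcal X$, feasible action sets $X_s\subseteq\mathcal X$ for $s\in\mathcal S$. The game lasts $T$ rounds from initial state $s_1$. In round $t$ the decision maker plays a (possibly randomized) $x_t\in X_{s_t}$; simultaneously an adversary chooses a transition function $g_t$ and a reward function $f_t$ (defined on pairs $(s,x)$ with $x\in X_s$, rewards in $[0,1]$). Then $s_{t+1}=g_t(s_t,x_t)$, the reward is $f_t(s_t,x_t)$, and $g_t,f_t$ are revealed. A policy is $\gamma:\mathcal S\to\mathcal X$ with $\gamma(s)\in X_s$; its simulation is $s^\gamma_1=s_1$, $x^\gamma_t=\gamma(s^\gamma_t)$, $s^\gamma_{t+1}=g_t(s^\gamma_t,x^\gamma_t)$. The regret w.r.t. a finite policy set $\Gamma$ is $\max_{\gamma\in\Gamma}\sum_t f_t(s^\gamma_t,x^\gamma_t)-\sum_t\mathbb{E}[f_t(s_t,x_t)]$. *)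

theory Defs
  imports "HOL-Probability.Probability"
begin

record ddmdp =
  St   :: "nat set"
  Act  :: "nat set"
  Feas :: "nat \<Rightarrow> nat set"
  init :: nat
  Pol  :: "(nat \<Rightarrow> nat) set"

type_synonym trans = "nat \<Rightarrow> nat \<Rightarrow> nat"
type_synonym rew = "nat \<Rightarrow> nat \<Rightarrow> real"

text \<open>History entry of a past round: (state, action played, revealed g, revealed f).\<close>
type_synonym hist = "(nat \<times> nat \<times> trans \<times> rew) list"

text \<open>An online (randomized) algorithm: given the static instance data, the horizon T,
the round index t, the current state and the history of past rounds, it outputs a
distribution over actions.\<close>
type_synonym algorithm = "ddmdp \<Rightarrow> nat \<Rightarrow> nat \<Rightarrow> nat \<Rightarrow> hist \<Rightarrow> nat pmf"

definition valid_alg :: "algorithm \<Rightarrow> bool" where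
  "valid_alg A \<longleftrightarrow> (\<forall>P T t s h. Feas P s \<noteq> {} \<longrightarrow> set_pmf (A P T t s h) \<subseteq> Feas P s)"

text \<open>Well-formed T-round instance (rounds indexed 0..T-1).\<close>
definition wf_instance :: "ddmdp \<Rightarrow> nat \<Rightarrow> (nat \<Rightarrow> trans) \<Rightarrow> (nat \<Rightarrow> rew) \<Rightarrow> bool" where
  "wf_instance P T g f \<longleftrightarrow>
     finite (St P) \<and> finite (Act P) \<and> init P \<in> St P \<and>
     (\<forall>s\<in>St P. Feas P s \<subseteq> Act P \<and> Feas P s \<noteq> {}) \<and>
     finite (Pol P) \<and> Pol P \<noteq> {} \<and>
     (\<forall>\<gamma>\<in>Pol P. \<forall>s\<in>St P. \<gamma> s \<in> Feas P s) \<and>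
     (\<forall>t<T. \<forall>s\<in>St P. \<forall>x\<in>Feas P s. g t s x \<in> St P \<and> 0 \<le> f t s x \<and> f t s x \<le> 1)"

fun run :: "algorithm \<Rightarrow> ddmdp \<Rightarrow> nat \<Rightarrow> (nat \<Rightarrow> trans) \<Rightarrow> (nat \<Rightarrow> rew) \<Rightarrow> nat \<Rightarrow> (hist \<times> nat) pmf" where
  "run A P T g f 0 = return_pmf ([], init P)"
| "run A P T g f (Suc t) =
     bind_pmf (run A P T g f t) (\<lambda>(h, s).
       bind_pmf (A P T t s h) (\<lambda>x. return_pmf (h @ [(s, x, g t, f t)], g t s x)))"

definition alg_reward :: "algorithm \<Rightarrow> ddmdp \<Rightarrow> nat \<Rightarrow> (nat \<Rightarrow> trans) \<Rightarrow> (nat \<Rightarrow> rew) \<Rightarrow> real" where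
  "alg_reward A P T g f =
     measure_pmf.expectation (run A P T g f T)
       (\<lambda>(h, s). \<Sum>(s', x, g', f') \<leftarrow> h. f' s' x)"

fun pol_state :: "ddmdp \<Rightarrow> (nat \<Rightarrow> trans) \<Rightarrow> (nat \<Rightarrow> nat) \<Rightarrow> nat \<Rightarrow> nat" where
  "pol_state P g \<gamma> 0 = init P"
| "pol_state P g \<gamma> (Suc t) = g t (pol_state P g \<gamma> t) (\<gamma> (pol_state P g \<gamma> t))"

definition pol_reward :: "ddmdp \<Rightarrow> nat \<Rightarrow> (nat \<Rightarrow> trans) \<Rightarrow> (nat \<Rightarrow> rew) \<Rightarrow> (nat \<Rightarrow> nat) \<Rightarrow> real" where
  "pol_reward P T g f \<gamma> = (\<Sum>t<T. f t (pol_state P g \<gamma> t) (\<gamma> (pol_state P g \<gamma> t)))"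

definition regret :: "algorithm \<Rightarrow> ddmdp \<Rightarrow> nat \<Rightarrow> (nat \<Rightarrow> trans) \<Rightarrow> (nat \<Rightarrow> rew) \<Rightarrow> real" where
  "regret A P T g f = (MAX \<gamma>\<in>Pol P. pol_reward P T g f \<gamma>) - alg_reward A P T g f"

end

theory Submission
  imports Defs
begin

text \<open>In the start state 0 the first action decides everything: it leads either to
the absorbing state 1, which pays 1 in every round, or to the absorbing state 2, which
pays nothing. Knowing the algorithm, the adversary declares as the good action b the one
that the algorithm's first-round distribution plays with probability at most 1/2. The
constant policy b then earns T, while the algorithm earns T times the probability of
playing b first, i.e. at most T/2.\<close>

lemma ex_pmf_le_half:
  fixes p :: "'a pmf"
  assumes "a \<noteq> b"
  shows "\<exists>c\<in>{a, b}. pmf p c \<le> 1/2"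
proof -
  have "pmf p a + pmf p b = measure_pmf.prob p {a, b}"
    using assms by (simp add: measure_measure_pmf_finite)
  also have "\<dots> \<le> 1"
    by simp
  finally show ?thesis
    by auto
qed

definition hist_reward :: "hist \<Rightarrow> real" where
  "hist_reward h = (\<Sum>(s, x, g, f) \<leftarrow> h. f s x)"

lemma hist_reward_snoc [simp]: "hist_reward (h @ [(s, x, g, f)]) = hist_reward h + f s x"
  by (simp add: hist_reward_def)

lemma alg_reward_eq_expectation_hist_reward:
  "alg_reward A P T g f =
     measure_pmf.expectation (map_pmf (map_prod hist_reward id) (run A P T g f T)) fst"
  unfolding alg_reward_def integral_map_pmf
  by (rule Bochner_Integration.integral_cong) (auto simp: hist_reward_def)

lemma run_Suc_absorbing:
  assumes "\<And>h s x. (h, s) \<in> set_pmf (run A P T g f t) \<Longrightarrow> g t s x = s \<and> f t s x = r s"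
  shows "map_pmf (map_prod hist_reward id) (run A P T g f (Suc t)) =
         map_pmf (\<lambda>(v, s). (v + r s, s)) (map_pmf (map_prod hist_reward id) (run A P T g f t))"
  unfolding run.simps map_bind_pmf pmf.map_comp map_pmf_def[of _ "run A P T g f t"]
  using assms by (intro bind_pmf_cong[OF refl]) (auto simp: map_bind_pmf)

definition trap_mdp :: ddmdp where
  "trap_mdp = \<lparr>St = {0, 1, 2}, Act = {0, 1}, Feas = (\<lambda>s. {0, 1}), init = 0,
               Pol = {(\<lambda>s. 0), (\<lambda>s. 1)}\<rparr>"

definition trap_trans :: "nat \<Rightarrow> nat \<Rightarrow> trans" where
  "trap_trans b t s x = (if s = 0 then if x = b then 1 else 2 else s)"

definition trap_rew :: "nat \<Rightarrow> nat \<Rightarrow> rew" where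
  "trap_rew b t s x = (if s = 0 then if x = b then 1 else 0 else if s = 1 then 1 else 0)"

lemma init_trap_mdp [simp]: "init trap_mdp = 0"
  by (simp add: trap_mdp_def)

lemma wf_instance_trap:
  assumes "b \<in> {0, 1}"
  shows "wf_instance trap_mdp T (trap_trans b) (trap_rew b)"
  using assms by (auto simp: wf_instance_def trap_mdp_def trap_trans_def trap_rew_def)

lemma run_trap:
  assumes "1 \<le> t"
  shows "map_pmf (map_prod hist_reward id) (run A trap_mdp T (trap_trans b) (trap_rew b) t) =
         map_pmf (\<lambda>x. if x = b then (real t, 1) else (0, 2)) (A trap_mdp T 0 0 [])"
  using assms
proof (induction t rule: dec_induct)
  case base
  show ?case
    by (simp add: bind_return_pmf pmf.map_comp hist_reward_def trap_trans_def trap_rew_def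
        flip: map_pmf_def) (intro map_pmf_cong; simp)
next
  case (step t)
  have absorbed: "s \<in> {1, 2}"
    if "(h, s) \<in> set_pmf (run A trap_mdp T (trap_trans b) (trap_rew b) t)" for h s
  proof -
    have "(hist_reward h, s) \<in> set_pmf (map_pmf (map_prod hist_reward id)
            (run A trap_mdp T (trap_trans b) (trap_rew b) t))"
      using that by force
    then show ?thesis
      unfolding step.IH by (auto split: if_splits)
  qed
  have "map_pmf (map_prod hist_reward id) (run A trap_mdp T (trap_trans b) (trap_rew b) (Suc t)) =
        map_pmf (\<lambda>(v, s). (v + (if s = 1 then 1 else 0), s))
          (map_pmf (map_prod hist_reward id) (run A trap_mdp T (trap_trans b) (trap_rew b) t))"
    by (rule run_Suc_absorbing) (auto dest: absorbed simp: trap_trans_def trap_rew_def)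
  also have "\<dots> = map_pmf (\<lambda>x. if x = b then (real (Suc t), 1) else (0, 2)) (A trap_mdp T 0 0 [])"
    unfolding step.IH pmf.map_comp by (intro map_pmf_cong) auto
  finally show ?case .
qed

lemma alg_reward_trap:
  assumes "1 \<le> T"
  shows "alg_reward A trap_mdp T (trap_trans b) (trap_rew b) = real T * pmf (A trap_mdp T 0 0 []) b"
proof -
  have "alg_reward A trap_mdp T (trap_trans b) (trap_rew b) =
        measure_pmf.expectation (A trap_mdp T 0 0 []) (\<lambda>x. real T * indicator {b} x)"
    unfolding alg_reward_eq_expectation_hist_reward run_trap[OF assms] integral_map_pmf
    by (rule Bochner_Integration.integral_cong) auto
  then show ?thesis
    by (simp add: measure_pmf_single)
qed

lemma pol_state_trap_const_Suc: "pol_state trap_mdp (trap_trans b) (\<lambda>s. b) (Suc t) = 1"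
  by (induction t) (simp_all add: trap_trans_def)

lemma pol_reward_trap_const: "pol_reward trap_mdp T (trap_trans b) (trap_rew b) (\<lambda>s. b) = real T"
proof -
  have "trap_rew b t (pol_state trap_mdp (trap_trans b) (\<lambda>s. b) t) b = 1" for t
    by (cases t) (simp_all add: pol_state_trap_const_Suc trap_rew_def del: pol_state.simps(2))
  then show ?thesis
    by (simp add: pol_reward_def)
qed

theorem proposition1:
  shows "\<exists>c>0. \<forall>T\<ge>1. \<forall>A. valid_alg A \<longrightarrow>
           (\<exists>P g f. wf_instance P T g f \<and> regret A P T g f \<ge> c * real T)"
proof (intro exI[of _ "1/2"] conjI allI impI)
  fix T :: nat and A :: algorithm
  assume T: "1 \<le> T"
  obtain b :: nat where b: "b \<in> {0, 1}" "pmf (A trap_mdp T 0 0 []) b \<le> 1/2"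
    using ex_pmf_le_half[of "0::nat" 1 "A trap_mdp T 0 0 []"] by auto
  have "pol_reward trap_mdp T (trap_trans b) (trap_rew b) (\<lambda>s. b) \<le>
        (MAX \<gamma>\<in>Pol trap_mdp. pol_reward trap_mdp T (trap_trans b) (trap_rew b) \<gamma>)"
    using b(1) by (intro Max_ge) (auto simp: trap_mdp_def)
  then have "real T \<le> (MAX \<gamma>\<in>Pol trap_mdp. pol_reward trap_mdp T (trap_trans b) (trap_rew b) \<gamma>)"
    by (simp only: pol_reward_trap_const)
  moreover have "alg_reward A trap_mdp T (trap_trans b) (trap_rew b) \<le> real T * (1/2)"
    unfolding alg_reward_trap[OF T] using b(2) by (rule mult_left_mono) simp
  ultimately have "1/2 * real T \<le> regret A trap_mdp T (trap_trans b) (trap_rew b)"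
    unfolding regret_def by simp
  then show "\<exists>P g f. wf_instance P T g f \<and> regret A P T g f \<ge> 1/2 * real T"
    using wf_instance_trap[OF b(1)] by blast
qed simp

end
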